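(* Let $\rho=\sum_{i=1}^n P_i|e_i\rangle\langle e_i|$ be a state with finite energies $E_1,\dots,E_n$. Let $Z=\sum_i e^{-E_i/kT}$ and $A_i=e^{-E_i/kT}/Z$, and let $\sigma^T=\sum_i A_i|e_i\rangle\langle e_i|$ be the Gibbs state on the same energy levels. Then for every $\varepsilon\in[0,1)$, $$W^\varepsilon(\rho\to\sigma^T)=kT\ln 2\; D_0^\varepsilon(\rho\|\sigma^T).$$
   Context: Conventions. The constants $k>0$ (Boltzmann's constant) and $T>0$ (temperature) are fixed. A state is a finite-level system with energies $E_1,\dots,E_d\in\mathbb{R}\cup\{+\infty\}$, not all $+\infty$, together with a diagonal density matrix $\rho=\sum_i\lambda_i|e_i\rangle\langle e_i|$. Equivalently, it is a probability vector $(\lambda_i)$ over the levels, and we require $\lambda_i=0$ whenever $E_i=+\infty$. Gibbs rescaling. $G^T(\rho)$ is the function on $[0,\infty)$ built as follows. Each level $i$ with $E_i<\infty$ is represented by a block: an interval of length $e^{-E_i/kT}$ on which the function takes the constant value $\lambda_i e^{E_i/kT}$, so the block has area $\lambda_i$. The blocks are placed consecutively starting at $0$, in order of nonincreasing height. The function is $0$ beyond $Z=\sum_{i:E_i<\infty}e^{-E_i/kT}$. Thus $G^T(\rho)$ is a nonincreasing probability density supported in $[0,Z]$. Relative mixedness. For nonincreasing integrable functions $f,g\ge 0$ on $[0,\infty)$, $$M(f\|g):=\max\Big\{m>0:\ \int_0^l f(x)\,dx\ge\int_0^{lm}g(x)\,dx\ \text{for all } l\ge 0\Big\}.$$ For $\varepsilon\in[0,1)$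 define $$W^\varepsilon(\rho\to\sigma):=kT\ln M\big(G^T(\rho)/(1-\varepsilon)\,\big\|\,G^T(\sigma)\big).$$ Smooth relative min-entropy. For commuting diagonal $\rho$ and $\sigma^T$ as in the claim, the (fractional) smooth relative entropy of order $0$ is $$D_0^\varepsilon(\rho\|\sigma^T):=-\log_2\min\Big\{\sum_i t_iA_i:\ t\in[0,1]^n,\ \sum_i t_iP_i\ge 1-\varepsilon\Big\}.$$ *)

theory Defs
  imports "HOL-Analysis.Analysis"
begin

text \<open>A state on levels 0..<n with (finite) energies E i and populations P i.
  kB is Boltzmann's constant, T the temperature.\<close>

definition block_width :: "real \<Rightarrow> real \<Rightarrow> (nat \<Rightarrow> real) \<Rightarrow> nat \<Rightarrow> real" where
  "block_width kB T E i = exp (- E i / (kB * T))"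

definition block_height :: "real \<Rightarrow> real \<Rightarrow> (nat \<Rightarrow> real) \<Rightarrow> (nat \<Rightarrow> real) \<Rightarrow> nat \<Rightarrow> real" where
  "block_height kB T E P i = P i * exp (E i / (kB * T))"

definition height_sorting :: "real \<Rightarrow> real \<Rightarrow> nat \<Rightarrow> (nat \<Rightarrow> real) \<Rightarrow> (nat \<Rightarrow> real) \<Rightarrow> (nat \<Rightarrow> nat) \<Rightarrow> bool" where
  "height_sorting kB T n E P \<pi> \<longleftrightarrow> \<pi> permutes {..<n} \<and>
     (\<forall>j1 j2. j1 \<le> j2 \<and> j2 < n \<longrightarrow> block_height kB T E P (\<pi> j2) \<le> block_height kB T E P (\<pi> j1))"

text \<open>Gibbs rescaling G^T(rho): blocks placed consecutively from 0 in nonincreasing height,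
  block j occupying [S j, S (j+1)), function 0 beyond Z.\<close>
definition gibbs_rescaling :: "real \<Rightarrow> real \<Rightarrow> nat \<Rightarrow> (nat \<Rightarrow> real) \<Rightarrow> (nat \<Rightarrow> real) \<Rightarrow> real \<Rightarrow> real" where
  "gibbs_rescaling kB T n E P x =
     (let \<pi> = (SOME \<pi>. height_sorting kB T n E P \<pi>);
          S = (\<lambda>j. \<Sum>m<j. block_width kB T E (\<pi> m))
      in \<Sum>j<n. if S j \<le> x \<and> x < S (Suc j) then block_height kB T E P (\<pi> j) else 0)"

definition rel_mixedness :: "(real \<Rightarrow> real) \<Rightarrow> (real \<Rightarrow> real) \<Rightarrow> real" where
  "rel_mixedness f g = (GREATEST m. m > 0 \<and>
     (\<forall>l\<ge>0. integral {0..l} f \<ge> integral {0..l * m} g))"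

definition work_eps :: "real \<Rightarrow> real \<Rightarrow> real \<Rightarrow> nat \<Rightarrow> (nat \<Rightarrow> real) \<Rightarrow> (nat \<Rightarrow> real) \<Rightarrow> (nat \<Rightarrow> real) \<Rightarrow> real" where
  "work_eps kB T \<epsilon> n E P Q =
     kB * T * ln (rel_mixedness (\<lambda>x. gibbs_rescaling kB T n E P x / (1 - \<epsilon>))
                                (gibbs_rescaling kB T n E Q))"

text \<open>Fractional smooth relative min-entropy D_0^eps(rho||sigma) for commuting diagonal states
  with eigenvalues P i and A i.\<close>
definition D0_eps :: "real \<Rightarrow> nat \<Rightarrow> (nat \<Rightarrow> real) \<Rightarrow> (nat \<Rightarrow> real) \<Rightarrow> real" where
  "D0_eps \<epsilon> n P A = - log 2 (LEAST v. \<exists>t. (\<forall>i<n. 0 \<le> t i \<and> t i \<le> 1) \<and>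
        (\<Sum>i<n. t i * P i) \<ge> 1 - \<epsilon> \<and> v = (\<Sum>i<n. t i * A i))"

end

theory Submission
  imports Defs
begin

(* Let w_i = e^{-E_i/kT} be the block widths, Z their sum, and lay the blocks of
   rho out in order of nonincreasing height P_i / w_i.  The integral of G^T(rho) over [0,l] is
   the "Lorenz curve" F(l) = sum_j tau_j(l) P_j, where tau_j(l) is the fraction of block j lying
   in [0,l]; the Gibbs state has the flat profile 1/Z on [0,Z], with integral min(y,Z)/Z.
   A greedy (fractional knapsack) argument shows that F(l) is the largest probability mass
   a test vector t in [0,1]^n can collect with Gibbs weight at most l/Z.  Hence, with
   L = min { l : F(l) >= 1 - eps }, both sides of the theorem are governed by L:
     min { sum t_i A_i : sum t_i P_i >= 1 - eps } = L / Z   and   M(G(rho)/(1-eps) || G(sigma)) = Z / L,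
   so W^eps = kT ln (Z/L) = kT ln 2 * (-log2 (L/Z)) = kT ln 2 * D_0^eps. *)

lemma height_sorting_exists: "\<exists>\<pi>. height_sorting kB T n E P \<pi>"
proof -
  define f where "f = (\<lambda>i. - block_height kB T E P i)"
  define xs where "xs = sort_key f [0..<n]"
  have "mset xs = mset [0..<n]" by (simp add: xs_def)
  then obtain p where p: "p permutes {..<length [0..<n]}" "permute_list p [0..<n] = xs"
    by (rule mset_eq_permutation)
  have pn: "p permutes {..<n}" using p by simp
  have len: "length xs = n" using p(2) by auto
  have nth: "xs ! j = p j" if j: "j < n" for j
  proof -
    have "p j < n" using permutes_in_image[OF pn] j by auto
    then show ?thesis using p(2)[symmetric] p(1) j by (simp add: permute_list_nth)
  qed
  have sorted: "sorted (map f xs)" by (simp add: xs_def)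
  show ?thesis unfolding height_sorting_def
  proof (intro exI conjI allI impI)
    show "p permutes {..<n}" by (rule pn)
    fix j1 j2 assume j: "j1 \<le> j2 \<and> j2 < n"
    then have "f (xs ! j1) \<le> f (xs ! j2)"
      using sorted_nth_mono[OF sorted, of j1 j2] len by simp
    then show "block_height kB T E P (p j2) \<le> block_height kB T E P (p j1)"
      using nth j by (simp add: f_def)
  qed
qed

lemma height_sorting_chosen:
  "height_sorting kB T n E P (SOME \<pi>. height_sorting kB T n E P \<pi>)"
  using height_sorting_exists by (rule someI_ex)

lemma block_width_pos: "0 < block_width kB T E i"
  by (simp add: block_width_def)

lemma block_height_eq: "block_height kB T E P i = P i / block_width kB T E i"
  by (simp add: block_height_def block_width_def exp_minus field_simps)

lemma interval_step_has_integral: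
  fixes a b l c :: real
  assumes "0 \<le> a" "a \<le> b" "0 \<le> l"
  shows "((\<lambda>x. if a \<le> x \<and> x < b then c else 0) has_integral c * (min l b - min l a)) {0..l}"
proof (cases "a \<le> l")
  case True
  define d where "d = min l b"
  have ad: "a \<le> d" using True assms by (simp add: d_def)
  have "((\<lambda>x. c) has_integral c * (d - a)) {a..d}"
    using has_integral_const_real[of c a d] ad by (simp add: mult.commute)
  moreover have eq: "{a..d} \<inter> {0..l} = {a..d}"
    using assms ad by (auto simp: d_def)
  ultimately have "((\<lambda>x. if x \<in> {a..d} then c else 0) has_integral c * (d - a)) {0..l}"
    unfolding has_integral_restrict_Int eq by simp
  then have "((\<lambda>x. if a \<le> x \<and> x < b then c else 0) has_integral c * (d - a)) {0..l}"
    by (rule has_integral_spike_finite[where S="{d}", rotated 2]) (auto simp: d_def)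
  then show ?thesis using True by (simp add: d_def)
next
  case False
  have "((\<lambda>x. if a \<le> x \<and> x < b then c else 0) has_integral 0) {0..l}"
    by (rule has_integral_spike_finite[where S="{}", OF _ _ has_integral_0]) (use False in auto)
  then show ?thesis using False assms by simp
qed

section \<open>Blocks laid out consecutively\<close>

text \<open>Blocks of widths w 0, w 1, ... are placed consecutively from 0; this is the fraction of
  block j that lies in [0,l].\<close>
definition covered_fraction :: "(nat \<Rightarrow> real) \<Rightarrow> real \<Rightarrow> nat \<Rightarrow> real" where
  "covered_fraction w l j = (min l (\<Sum>m<Suc j. w m) - min l (\<Sum>m<j. w m)) / w j"

lemma covered_length:
  "w j \<noteq> 0 \<Longrightarrow> covered_fraction w l j * w j = min l (\<Sum>m<Suc j. w m) - min l (\<Sum>m<j. w m)"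
  by (simp add: covered_fraction_def)

lemma covered_fraction_bounds:
  assumes "0 < w j"
  shows "0 \<le> covered_fraction w l j \<and> covered_fraction w l j \<le> 1"
proof -
  have "0 \<le> min l (\<Sum>m<Suc j. w m) - min l (\<Sum>m<j. w m)"
       "min l (\<Sum>m<Suc j. w m) - min l (\<Sum>m<j. w m) \<le> w j"
    using assms by (auto simp: min_def)
  then show ?thesis using assms by (simp add: covered_fraction_def divide_le_eq_1)
qed

lemma covered_fraction_weight_sum:
  assumes "\<And>j. j < n \<Longrightarrow> 0 < w j" and "0 \<le> l"
  shows "(\<Sum>j<n. covered_fraction w l j * w j) = min l (\<Sum>j<n. w j)"
proof -
  have "(\<Sum>j<n. covered_fraction w l j * w j) =
        (\<Sum>j<n. min l (\<Sum>m<Suc j. w m) - min l (\<Sum>m<j. w m))"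
    using assms(1) by (intro sum.cong refl covered_length) (simp add: less_imp_neq[symmetric])
  also have "\<dots> = min l (\<Sum>j<n. w j)"
    using sum_lessThan_telescope[of "\<lambda>j. min l (\<Sum>m<j. w m)" n] assms(2) by simp
  finally show ?thesis .
qed

lemma covered_fraction_pos_imp:
  assumes "0 < w j" "0 < covered_fraction w l j"
  shows "(\<Sum>m<j. w m) < l"
  using assms by (auto simp: covered_fraction_def min_def split: if_splits)

lemma covered_fraction_lt_one_imp:
  assumes "0 < w j" "covered_fraction w l j < 1"
  shows "l < (\<Sum>m<Suc j. w m)"
  using assms by (auto simp: covered_fraction_def min_def split: if_splits)

lemma covered_fraction_full:
  assumes "0 < w j" "(\<Sum>m<Suc j. w m) \<le> l"
  shows "covered_fraction w l j = 1"
  using assms by (auto simp: covered_fraction_def min_def)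

lemma covered_fraction_zero:
  assumes "\<And>m. m \<le> j \<Longrightarrow> 0 \<le> w m"
  shows "covered_fraction w 0 j = 0"
proof -
  have "0 \<le> (\<Sum>m<j. w m)" using assms by (intro sum_nonneg) simp
  moreover have "0 \<le> (\<Sum>m<Suc j. w m)" using assms by (intro sum_nonneg) simp
  ultimately show ?thesis by (simp add: covered_fraction_def)
qed

lemma density_threshold_exchange:
  fixes w p u \<tau> :: "'a \<Rightarrow> real" and c :: real
  assumes w: "\<And>j. j \<in> I \<Longrightarrow> 0 < w j"
    and u: "\<And>j. j \<in> I \<Longrightarrow> 0 \<le> u j \<and> u j \<le> 1"
    and unsaturated: "\<And>j. j \<in> I \<Longrightarrow> \<tau> j < 1 \<Longrightarrow> p j / w j \<le> c"
    and used: "\<And>j. j \<in> I \<Longrightarrow> 0 < \<tau> j \<Longrightarrow> c \<le> p j / w j"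
    and c: "0 \<le> c"
    and budget: "(\<Sum>j\<in>I. u j * w j) \<le> (\<Sum>j\<in>I. \<tau> j * w j)"
  shows "(\<Sum>j\<in>I. u j * p j) \<le> (\<Sum>j\<in>I. \<tau> j * p j)"
proof -
  have termwise: "(u j - \<tau> j) * p j \<le> c * ((u j - \<tau> j) * w j)" if j: "j \<in> I" for j
  proof -
    have "(u j - \<tau> j) * (p j / w j - c) \<le> 0"
    proof (cases "u j \<le> \<tau> j")
      case True
      then show ?thesis
        using used[OF j] u[OF j] by (cases "u j = \<tau> j") (auto intro: mult_nonpos_nonneg)
    next
      case False
      then show ?thesis using unsaturated[OF j] u[OF j] by (auto intro: mult_nonneg_nonpos)
    qed
    then have "(u j - \<tau> j) * (p j / w j - c) * w j \<le> 0"
      using w[OF j] by (simp add: mult_nonpos_nonneg)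
    moreover have "(u j - \<tau> j) * p j = (u j - \<tau> j) * (p j / w j - c) * w j + c * ((u j - \<tau> j) * w j)"
      using w[OF j] by (simp add: field_simps)
    ultimately show ?thesis by linarith
  qed
  have "(\<Sum>j\<in>I. u j * p j) - (\<Sum>j\<in>I. \<tau> j * p j) = (\<Sum>j\<in>I. (u j - \<tau> j) * p j)"
    by (simp add: sum_subtractf algebra_simps)
  also have "\<dots> \<le> (\<Sum>j\<in>I. c * ((u j - \<tau> j) * w j))"
    by (intro sum_mono termwise)
  also have "\<dots> = c * ((\<Sum>j\<in>I. u j * w j) - (\<Sum>j\<in>I. \<tau> j * w j))"
    by (simp add: sum_distrib_left sum_subtractf algebra_simps)
  also have "\<dots> \<le> 0" using budget c by (simp add: mult_nonneg_nonpos)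
  finally show ?thesis by simp
qed

lemma greedy_fractional_knapsack:
  fixes w p u :: "nat \<Rightarrow> real" and l :: real
  assumes w: "\<And>j. j < n \<Longrightarrow> 0 < w j"
    and p: "\<And>j. j < n \<Longrightarrow> 0 \<le> p j"
    and sorted: "\<And>i j. i \<le> j \<Longrightarrow> j < n \<Longrightarrow> p j / w j \<le> p i / w i"
    and u: "\<And>j. j < n \<Longrightarrow> 0 \<le> u j \<and> u j \<le> 1"
    and l: "0 \<le> l"
    and budget: "(\<Sum>j<n. u j * w j) \<le> min l (\<Sum>j<n. w j)"
  shows "(\<Sum>j<n. u j * p j) \<le> (\<Sum>j<n. covered_fraction w l j * p j)"
proof -
  let ?\<tau> = "covered_fraction w l"
  have order: "i \<le> j" if ij: "i < n" "j < n" "0 < ?\<tau> i" "?\<tau> j < 1" for i j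
  proof (rule ccontr)
    assume "\<not> i \<le> j"
    then have "(\<Sum>m<Suc j. w m) \<le> (\<Sum>m<i. w m)"
      using ij w by (intro sum_mono2) (auto intro: less_imp_le)
    moreover have "(\<Sum>m<i. w m) < l" using covered_fraction_pos_imp w ij by blast
    moreover have "l < (\<Sum>m<Suc j. w m)" using covered_fraction_lt_one_imp w ij by blast
    ultimately show False by simp
  qed
  define D where "D = insert 0 ((\<lambda>j. p j / w j) ` {j. j < n \<and> ?\<tau> j < 1})"
  define c where "c = Max D"
  have finD: "finite D" by (simp add: D_def)
  have c_nonneg: "0 \<le> c" unfolding c_def using finD by (intro Max_ge) (auto simp: D_def)
  have c_upper: "p j / w j \<le> c" if "j < n" "?\<tau> j < 1" for j
    unfolding c_def using finD that by (intro Max_ge) (auto simp: D_def)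
  have c_lower: "c \<le> p i / w i" if i: "i < n" "0 < ?\<tau> i" for i
  proof -
    have "p j / w j \<le> p i / w i" if "j < n" "?\<tau> j < 1" for j
      using sorted order i that by blast
    moreover have "0 \<le> p i / w i" using p[of i] w[of i] i by simp
    ultimately show ?thesis unfolding c_def using finD by (subst Max_le_iff) (auto simp: D_def)
  qed
  show ?thesis
  proof (rule density_threshold_exchange[where c = c])
    show "(\<Sum>j<n. u j * w j) \<le> (\<Sum>j<n. ?\<tau> j * w j)"
      using budget covered_fraction_weight_sum[OF w l] by simp
  qed (use w u c_upper c_lower c_nonneg in auto)
qed

lemma gibbs_rescaling_has_integral:
  fixes kB T d l :: real and n :: nat and E Q :: "nat \<Rightarrow> real"
  defines "\<pi> \<equiv> SOME \<pi>. height_sorting kB T n E Q \<pi>"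
  defines "w \<equiv> \<lambda>j. block_width kB T E (\<pi> j)"
  assumes l: "0 \<le> l"
  shows "((\<lambda>x. gibbs_rescaling kB T n E Q x / d) has_integral
           (\<Sum>j<n. block_height kB T E Q (\<pi> j) / d * (covered_fraction w l j * w j))) {0..l}"
proof -
  have w_pos: "0 < w j" for j by (simp add: w_def block_width_pos)
  have integrand: "gibbs_rescaling kB T n E Q x / d =
      (\<Sum>j<n. if (\<Sum>m<j. w m) \<le> x \<and> x < (\<Sum>m<Suc j. w m)
              then block_height kB T E Q (\<pi> j) / d else 0)" for x
    unfolding gibbs_rescaling_def Let_def \<pi>_def[symmetric] w_def sum_divide_distrib
    by (rule sum.cong) auto
  have "((\<lambda>x. gibbs_rescaling kB T n E Q x / d) has_integral
      (\<Sum>j<n. block_height kB T E Q (\<pi> j) / d *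
               (min l (\<Sum>m<Suc j. w m) - min l (\<Sum>m<j. w m)))) {0..l}"
    unfolding integrand
    by (intro has_integral_sum finite_lessThan interval_step_has_integral l sum_nonneg)
       (auto simp: less_imp_le[OF w_pos])
  then show ?thesis using w_pos by (simp add: covered_length less_imp_neq[symmetric])
qed

section \<open>The Lorenz curve of a state\<close>

text \<open>A state on the levels below n: populations P and energies E.  The temperature enters only
  through the block widths, so no sign condition on kB and T is needed.\<close>
locale thermal_state =
  fixes kB T :: real and n :: nat and E P :: "nat \<Rightarrow> real"
  assumes n_pos: "1 \<le> n"
    and P_nonneg: "\<And>i. i < n \<Longrightarrow> 0 \<le> P i"
    and P_sum: "(\<Sum>i<n. P i) = 1"
begin

definition Z :: real where "Z = (\<Sum>i<n. block_width kB T E i)"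
definition gibbs :: "nat \<Rightarrow> real" where "gibbs i = block_width kB T E i / Z"
definition lev :: "nat \<Rightarrow> nat" where "lev = (SOME \<pi>. height_sorting kB T n E P \<pi>)"
definition ws :: "nat \<Rightarrow> real" where "ws j = block_width kB T E (lev j)"

text \<open>The integral of the Gibbs rescaling of P over [0,l].\<close>
definition lorenz :: "real \<Rightarrow> real" where
  "lorenz l = (\<Sum>j<n. covered_fraction ws l j * P (lev j))"

lemma ws_pos: "0 < ws j"
  by (simp add: ws_def block_width_pos)

lemma ws_fraction_bounds: "0 \<le> covered_fraction ws l j \<and> covered_fraction ws l j \<le> 1"
  by (rule covered_fraction_bounds) (rule ws_pos)

lemma lev_height_sorting: "height_sorting kB T n E P lev"
  unfolding lev_def by (rule height_sorting_chosen)

lemma lev_permutes: "lev permutes {..<n}"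
  using lev_height_sorting unfolding height_sorting_def by blast

lemma lev_sorted: "i \<le> j \<Longrightarrow> j < n \<Longrightarrow> P (lev j) / ws j \<le> P (lev i) / ws i"
  using lev_height_sorting unfolding height_sorting_def ws_def block_height_eq by blast

lemma sum_reindex: "(\<Sum>i<n. f i) = (\<Sum>j<n. f (lev j))"
  using sum.permute[OF lev_permutes] by (simp add: comp_def)

lemma sum_ws: "(\<Sum>j<n. ws j) = Z"
  unfolding Z_def ws_def by (rule sum_reindex[symmetric])

lemma Z_pos: "0 < Z"
  unfolding Z_def using n_pos by (intro sum_pos) (auto simp: block_width_pos lessThan_empty_iff)

lemma integral_rho:
  assumes "0 \<le> l"
  shows "integral {0..l} (\<lambda>x. gibbs_rescaling kB T n E P x / d) = lorenz l / d"
proof -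
  have "integral {0..l} (\<lambda>x. gibbs_rescaling kB T n E P x / d) =
        (\<Sum>j<n. block_height kB T E P (lev j) / d * (covered_fraction ws l j * ws j))"
    using gibbs_rescaling_has_integral[OF assms, of kB T n E P d]
    unfolding lev_def[symmetric] ws_def[abs_def] by (rule integral_unique)
  also have "\<dots> = lorenz l / d"
    unfolding lorenz_def sum_divide_distrib
    by (rule sum.cong) (auto simp: block_height_eq ws_def[symmetric] less_imp_neq[OF ws_pos, symmetric])
  finally show ?thesis .
qed

text \<open>The Gibbs state has the flat rescaling 1/Z on [0,Z].\<close>
lemma integral_gibbs:
  assumes "0 \<le> y"
  shows "integral {0..y} (gibbs_rescaling kB T n E gibbs) = min y Z / Z"
proof -
  define \<pi> where "\<pi> = (SOME \<pi>. height_sorting kB T n E gibbs \<pi>)"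
  define w where "w = (\<lambda>j. block_width kB T E (\<pi> j))"
  have w_pos: "\<And>j. 0 < w j" by (simp add: w_def block_width_pos)
  have "\<pi> permutes {..<n}"
    using height_sorting_chosen unfolding \<pi>_def height_sorting_def by blast
  then have "(\<Sum>j<n. w j) = Z"
    using sum.permute[of \<pi> "{..<n}" "block_width kB T E"] by (simp add: Z_def w_def comp_def)
  then have weight: "(\<Sum>j<n. covered_fraction w y j * w j) = min y Z"
    using covered_fraction_weight_sum[of n w y] w_pos assms by simp
  have height: "block_height kB T E gibbs i = 1 / Z" for i
    using block_width_pos[of kB T E i] by (simp add: block_height_eq gibbs_def)
  have "((\<lambda>x. gibbs_rescaling kB T n E gibbs x / 1) has_integral
          (\<Sum>j<n. block_height kB T E gibbs (\<pi> j) / 1 * (covered_fraction w y j * w j))) {0..y}"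
    unfolding w_def \<pi>_def by (rule gibbs_rescaling_has_integral[OF assms])
  moreover have "(\<Sum>j<n. block_height kB T E gibbs (\<pi> j) / 1 * (covered_fraction w y j * w j))
                 = min y Z / Z"
    unfolding height weight[symmetric] by (simp add: sum_divide_distrib)
  ultimately show ?thesis by (simp add: integral_unique)
qed

lemma lorenz_greedy:
  assumes "\<And>j. j < n \<Longrightarrow> 0 \<le> u j \<and> u j \<le> 1" and "0 \<le> l"
    and "(\<Sum>j<n. u j * ws j) \<le> min l Z"
  shows "(\<Sum>j<n. u j * P (lev j)) \<le> lorenz l"
  unfolding lorenz_def
proof (rule greedy_fractional_knapsack)
  show "0 \<le> P (lev j)" if "j < n" for j
    using P_nonneg permutes_in_image[OF lev_permutes] that by simp
qed (use assms ws_pos lev_sorted sum_ws in auto)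

lemma lorenz_weight:
  assumes "0 \<le> l" shows "(\<Sum>j<n. covered_fraction ws l j * ws j) = min l Z"
  using covered_fraction_weight_sum[OF ws_pos assms] by (simp add: sum_ws)

lemma lorenz_zero: "lorenz 0 = 0"
  unfolding lorenz_def by (simp add: covered_fraction_zero less_imp_le[OF ws_pos])

lemma lorenz_Z: "lorenz Z = 1"
proof -
  have "covered_fraction ws Z j = 1" if j: "j < n" for j
  proof (rule covered_fraction_full)
    show "0 < ws j" by (rule ws_pos)
    show "(\<Sum>m<Suc j. ws m) \<le> Z"
      unfolding sum_ws[symmetric] using j by (intro sum_mono2) (auto intro: less_imp_le[OF ws_pos])
  qed
  then have "lorenz Z = (\<Sum>j<n. P (lev j))" unfolding lorenz_def by simp
  also have "\<dots> = 1" using P_sum sum_reindex[of P] by simp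
  finally show ?thesis .
qed

lemma continuous_lorenz: "continuous_on UNIV lorenz"
  unfolding lorenz_def[abs_def] covered_fraction_def
  by (intro continuous_intros) (simp add: less_imp_neq[OF ws_pos, symmetric])

end

section \<open>The smoothing threshold\<close>

locale smoothed_thermal_state = thermal_state +
  fixes \<epsilon> :: real
  assumes eps_nonneg: "0 \<le> \<epsilon>" and eps_less_one: "\<epsilon> < 1"
begin

definition threshold :: real where
  "threshold = Inf {l. 0 \<le> l \<and> l \<le> Z \<and> 1 - \<epsilon> \<le> lorenz l}"

lemma threshold_attained:
  "0 \<le> threshold \<and> threshold \<le> Z \<and> 1 - \<epsilon> \<le> lorenz threshold"
proof -
  define C where "C = {l. 0 \<le> l \<and> l \<le> Z \<and> 1 - \<epsilon> \<le> lorenz l}"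
  have "C = {0..Z} \<inter> {l. 1 - \<epsilon> \<le> lorenz l}" by (auto simp: C_def)
  moreover have "closed {l. 1 - \<epsilon> \<le> lorenz l}"
    using continuous_lorenz by (intro closed_Collect_le continuous_intros) simp_all
  ultimately have "closed C" by (simp add: closed_Int)
  moreover have "Z \<in> C" using Z_pos lorenz_Z eps_nonneg by (simp add: C_def)
  moreover have "bdd_below C" unfolding C_def by (rule bdd_belowI[of _ 0]) auto
  ultimately have "Inf C \<in> C" by (intro closed_contains_Inf) auto
  then show ?thesis by (simp add: C_def threshold_def)
qed

lemma threshold_minimal:
  assumes "0 \<le> l" "l \<le> Z" "1 - \<epsilon> \<le> lorenz l"
  shows "threshold \<le> l"
  unfolding threshold_def using assms by (intro cInf_lower bdd_belowI[of _ 0]) auto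

lemma threshold_pos: "0 < threshold"
  using threshold_attained lorenz_zero eps_less_one by (cases "threshold = 0") auto

lemma gibbs_weight_sorted: "(\<Sum>i<n. t i * gibbs i) = (\<Sum>j<n. t (lev j) * ws j) / Z"
  using sum_reindex[of "\<lambda>i. t i * gibbs i"]
  by (simp add: gibbs_def ws_def sum_divide_distrib)

text \<open>The optimal test of D_0^eps accepts the blocks lying in [0, threshold].\<close>
lemma optimal_test_weight:
  "(LEAST v. \<exists>t. (\<forall>i<n. 0 \<le> t i \<and> t i \<le> 1) \<and> (\<Sum>i<n. t i * P i) \<ge> 1 - \<epsilon> \<and>
               v = (\<Sum>i<n. t i * gibbs i)) = threshold / Z"
proof (rule Least_equality)
  define t where "t = (\<lambda>i. covered_fraction ws threshold (inv lev i))"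
  have t_lev: "t (lev j) = covered_fraction ws threshold j" for j
    unfolding t_def using permutes_inverses(2)[OF lev_permutes] by simp
  show "\<exists>t. (\<forall>i<n. 0 \<le> t i \<and> t i \<le> 1) \<and> (\<Sum>i<n. t i * P i) \<ge> 1 - \<epsilon> \<and>
            threshold / Z = (\<Sum>i<n. t i * gibbs i)"
  proof (intro exI conjI allI impI)
    show "0 \<le> t i" "t i \<le> 1" for i
      using ws_fraction_bounds by (auto simp: t_def)
    show "1 - \<epsilon> \<le> (\<Sum>i<n. t i * P i)"
      using threshold_attained sum_reindex[of "\<lambda>i. t i * P i"] by (simp add: t_lev lorenz_def)
    show "threshold / Z = (\<Sum>i<n. t i * gibbs i)"
      using threshold_attained lorenz_weight by (simp add: gibbs_weight_sorted t_lev)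
  qed
next
  fix v assume "\<exists>t. (\<forall>i<n. 0 \<le> t i \<and> t i \<le> 1) \<and> (\<Sum>i<n. t i * P i) \<ge> 1 - \<epsilon> \<and>
                   v = (\<Sum>i<n. t i * gibbs i)"
  then obtain t where t: "\<forall>i<n. 0 \<le> t i \<and> t i \<le> 1" and mass: "1 - \<epsilon> \<le> (\<Sum>i<n. t i * P i)"
    and v: "v = (\<Sum>i<n. t i * gibbs i)" by blast
  define u where "u = (\<lambda>j. t (lev j))"
  have u: "0 \<le> u j \<and> u j \<le> 1" if "j < n" for j
    using t permutes_in_image[OF lev_permutes] that by (simp add: u_def)
  define l where "l = (\<Sum>j<n. u j * ws j)"
  have l_nonneg: "0 \<le> l" unfolding l_def using u ws_pos by (intro sum_nonneg) (simp add: less_imp_le)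
  have l_le_Z: "l \<le> Z" unfolding l_def sum_ws[symmetric] using u ws_pos
    by (intro sum_mono) (simp add: mult_le_cancel_right1 less_imp_le)
  have "(\<Sum>j<n. u j * P (lev j)) \<le> lorenz l"
    using u l_nonneg l_le_Z by (intro lorenz_greedy) (auto simp: l_def)
  then have "threshold \<le> l"
    using mass sum_reindex[of "\<lambda>i. t i * P i"] l_nonneg l_le_Z
    by (intro threshold_minimal) (simp_all add: u_def)
  moreover have "v = l / Z" unfolding v gibbs_weight_sorted l_def u_def ..
  ultimately show "threshold / Z \<le> v" using Z_pos by (simp add: divide_right_mono)
qed

text \<open>Stretching [0,l] by Z/threshold stays within the smoothed rescaling of rho, since a
  fraction s of the optimal test fits into weight l.\<close>
lemma mixedness_feasible:
  assumes l: "0 \<le> l"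
  shows "integral {0..l * (Z / threshold)} (gibbs_rescaling kB T n E gibbs)
         \<le> integral {0..l} (\<lambda>x. gibbs_rescaling kB T n E P x / (1 - \<epsilon>))"
proof -
  define s where "s = min (l * (Z / threshold)) Z / Z"
  have s: "0 \<le> s" "s \<le> 1" "s * threshold \<le> l"
    using l Z_pos threshold_pos by (auto simp: s_def field_simps min_def)
  let ?u = "\<lambda>j. s * covered_fraction ws threshold j"
  have "(\<Sum>j<n. ?u j * P (lev j)) \<le> lorenz l"
  proof (rule lorenz_greedy[OF _ l])
    show "0 \<le> ?u j \<and> ?u j \<le> 1" for j
      using ws_fraction_bounds s by (simp add: mult_le_one)
    have "(\<Sum>j<n. ?u j * ws j) = s * threshold"
      using lorenz_weight threshold_attained
      by (simp add: mult.assoc sum_distrib_left[symmetric] min_absorb1)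
    moreover have "s * threshold \<le> Z"
      using s threshold_attained by (meson mult_left_le_one_le order_trans)
    ultimately show "(\<Sum>j<n. ?u j * ws j) \<le> min l Z" using s by simp
  qed
  moreover have "(\<Sum>j<n. ?u j * P (lev j)) = s * lorenz threshold"
    by (simp add: lorenz_def sum_distrib_left mult.assoc)
  moreover have "s * (1 - \<epsilon>) \<le> s * lorenz threshold"
    using threshold_attained s by (simp add: mult_left_mono)
  ultimately have "s \<le> lorenz l / (1 - \<epsilon>)"
    using eps_less_one by (simp add: pos_le_divide_eq)
  moreover have "0 \<le> l * (Z / threshold)" using l Z_pos threshold_pos by simp
  then have "integral {0..l * (Z / threshold)} (gibbs_rescaling kB T n E gibbs) = s"
    unfolding s_def by (rule integral_gibbs)
  ultimately show ?thesis unfolding integral_rho[OF l] by simp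
qed

text \<open>No larger stretch works: at length Z/m the whole Gibbs mass must already be matched.\<close>
lemma mixedness_bounded:
  assumes m: "0 < m"
    and feasible: "\<forall>l\<ge>0. integral {0..l} (\<lambda>x. gibbs_rescaling kB T n E P x / (1 - \<epsilon>))
                         \<ge> integral {0..l * m} (gibbs_rescaling kB T n E gibbs)"
  shows "m \<le> Z / threshold"
proof -
  have Zm: "0 \<le> Z / m" using m Z_pos by simp
  have "integral {0..Z / m * m} (gibbs_rescaling kB T n E gibbs) = 1"
    using integral_gibbs[of "Z / m * m"] m Z_pos by simp
  then have "1 \<le> lorenz (Z / m) / (1 - \<epsilon>)"
    using feasible Zm integral_rho[OF Zm] by metis
  then have mass: "1 - \<epsilon> \<le> lorenz (Z / m)" using eps_less_one by (simp add: le_divide_eq)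
  show ?thesis
  proof (cases "Z / m \<le> Z")
    case True
    then have "threshold \<le> Z / m" using threshold_minimal Zm mass by blast
    then show ?thesis using m threshold_pos by (simp add: field_simps)
  next
    case False
    then have "m < 1" using m Z_pos by (simp add: field_simps)
    moreover have "1 \<le> Z / threshold" using threshold_attained threshold_pos by simp
    ultimately show ?thesis by simp
  qed
qed

lemma rel_mixedness_eq:
  "rel_mixedness (\<lambda>x. gibbs_rescaling kB T n E P x / (1 - \<epsilon>)) (gibbs_rescaling kB T n E gibbs)
   = Z / threshold"
  unfolding rel_mixedness_def
proof (rule Greatest_equality)
  show "Z / threshold > 0 \<and> (\<forall>l\<ge>0. integral {0..l} (\<lambda>x. gibbs_rescaling kB T n E P x / (1 - \<epsilon>))
        \<ge> integral {0..l * (Z / threshold)} (gibbs_rescaling kB T n E gibbs))"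
    using Z_pos threshold_pos mixedness_feasible by simp
qed (use mixedness_bounded in blast)

lemma work_eq_D0: "work_eps kB T \<epsilon> n E P gibbs = kB * T * ln 2 * D0_eps \<epsilon> n P gibbs"
proof -
  have "ln (Z / threshold) = ln 2 * - log 2 (threshold / Z)"
    using Z_pos threshold_pos by (simp add: log_def ln_div)
  then show ?thesis
    by (simp add: work_eps_def D0_eps_def rel_mixedness_eq optimal_test_weight)
qed

end

theorem mainTheorem7:
  fixes kB T \<epsilon> :: real and n :: nat and E P :: "nat \<Rightarrow> real"
  assumes "kB > 0" and "T > 0"
    and "n \<ge> 1"
    and "\<forall>i<n. P i \<ge> 0" and "(\<Sum>i<n. P i) = 1"
    and "0 \<le> \<epsilon>" and "\<epsilon> < 1"
  shows "let Z = (\<Sum>i<n. exp (- E i / (kB * T)));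
             A = (\<lambda>i. exp (- E i / (kB * T)) / Z)
         in work_eps kB T \<epsilon> n E P A = kB * T * ln 2 * D0_eps \<epsilon> n P A"
proof -
  interpret smoothed_thermal_state kB T n E P \<epsilon>
    using assms by unfold_locales auto
  have "(\<Sum>i<n. exp (- E i / (kB * T))) = Z"
    by (simp add: Z_def block_width_def)
  moreover have "(\<lambda>i. exp (- E i / (kB * T)) / Z) = gibbs"
    by (simp add: gibbs_def block_width_def fun_eq_iff)
  ultimately show ?thesis using work_eq_D0 by (simp add: Let_def)
qed

end
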